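(* For every $x\in\mathbb{R}^n$, $$\|Px\|_q^2\le\|x\|_q^2-\tfrac12D,\qquad\text{where }D=\sum_{i=1}^n\max_{j:\,m_{ij}>0}(x_i-x_j)^2.$$
   Context: Let $M=(m_{ij})$ be a symmetric $n\times n$ nonnegative matrix whose nonzero entries are all at least $1$ and whose diagonal entries are positive. Let $q=M\mathbf 1$ and $P=\mathrm{diag}(q)^{-1}M$. Define $\langle x,y\rangle_q=\sum_iq_ix_iy_i$ and $\|x\|_q^2=\langle x,x\rangle_q$. *)

theory Defs
  imports "HOL-Analysis.Analysis"
begin

definition degvec :: "real^'n^'n \<Rightarrow> real^'n" where
  "degvec M = M *v (\<chi> i. 1)"

definition transmat :: "real^'n^'n \<Rightarrow> real^'n^'n" where
  "transmat M = (\<chi> i j. M $ i $ j / degvec M $ i)"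

definition qinner :: "real^'n \<Rightarrow> real^'n \<Rightarrow> real^'n \<Rightarrow> real" where
  "qinner q x y = (\<Sum>i\<in>UNIV. q $ i * x $ i * y $ i)"

definition qnorm2 :: "real^'n \<Rightarrow> real^'n \<Rightarrow> real" where
  "qnorm2 q x = qinner q x x"

end

theory Submission
  imports Defs
begin

text \<open>Write \<open>y = P x\<close>, so \<open>q\<^sub>i y\<^sub>i = \<Sum>\<^sub>j m\<^sub>i\<^sub>j x\<^sub>j\<close>. By the variance decomposition of each row
  and the symmetry of \<open>M\<close>,
  \<open>\<parallel>x\<parallel>\<^sub>q\<^sup>2 - \<parallel>y\<parallel>\<^sub>q\<^sup>2 = \<Sum>\<^sub>i \<Sum>\<^sub>j m\<^sub>i\<^sub>j (x\<^sub>j - y\<^sub>i)\<^sup>2\<close>. In row \<open>i\<close> both \<open>m\<^sub>i\<^sub>i\<close> and any positive \<open>m\<^sub>i\<^sub>j\<close>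
  are at least 1, and \<open>(x\<^sub>i - y\<^sub>i)\<^sup>2 + (x\<^sub>j - y\<^sub>i)\<^sup>2 \<ge> (x\<^sub>i - x\<^sub>j)\<^sup>2 / 2\<close>, so the row term is at
  least half the largest \<open>(x\<^sub>i - x\<^sub>j)\<^sup>2\<close> over the neighbours \<open>j\<close> of \<open>i\<close>.\<close>

lemma sum_weighted_sq_deviation:
  fixes w f :: "'a \<Rightarrow> real"
  assumes mean: "(\<Sum>k\<in>A. w k * f k) = sum w A * c"
  shows "(\<Sum>k\<in>A. w k * (f k - c)^2) = (\<Sum>k\<in>A. w k * (f k)^2) - sum w A * c^2"
proof -
  have "(\<Sum>k\<in>A. w k * (f k - c)^2)
        = (\<Sum>k\<in>A. w k * (f k)^2) - 2 * c * (\<Sum>k\<in>A. w k * f k) + c^2 * sum w A"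
    by (simp add: power2_eq_square algebra_simps sum.distrib sum_subtractf
                  sum_distrib_left sum_distrib_right)
  then show ?thesis
    using mean by (simp add: power2_eq_square algebra_simps)
qed

lemma sq_diff_le_two_sum_sq_diff:
  fixes a b c :: real
  shows "(a - b)^2 \<le> 2 * ((a - c)^2 + (b - c)^2)"
proof -
  have "2 * ((a - c)^2 + (b - c)^2) - (a - b)^2 = (a + b - 2 * c)^2"
    by (simp add: power2_eq_square algebra_simps)
  then show ?thesis
    using zero_le_power2[of "a + b - 2 * c"] by linarith
qed

lemma sq_diff_le_two_weighted_sq_deviation:
  fixes w f :: "'a \<Rightarrow> real"
  assumes "finite A" "i \<in> A" "j \<in> A"
    and nonneg: "\<And>k. k \<in> A \<Longrightarrow> 0 \<le> w k"
    and "1 \<le> w i" "1 \<le> w j"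
  shows "(f i - f j)^2 \<le> 2 * (\<Sum>k\<in>A. w k * (f k - c)^2)"
proof (cases "i = j")
  case True
  have "0 \<le> (\<Sum>k\<in>A. w k * (f k - c)^2)"
    by (intro sum_nonneg) (simp add: nonneg)
  with True show ?thesis by simp
next
  case False
  have "(f i - c)^2 + (f j - c)^2 \<le> w i * (f i - c)^2 + w j * (f j - c)^2"
    using \<open>1 \<le> w i\<close> \<open>1 \<le> w j\<close>
    by (intro add_mono) (simp_all add: mult_le_cancel_right1)
  also have "\<dots> = (\<Sum>k\<in>{i, j}. w k * (f k - c)^2)"
    using False by simp
  also have "\<dots> \<le> (\<Sum>k\<in>A. w k * (f k - c)^2)"
    using assms by (intro sum_mono2) auto
  finally show ?thesis
    using sq_diff_le_two_sum_sq_diff[of "f i" "f j" c] by (smt (verit))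
qed

lemma degvec_nth: "degvec M $ i = (\<Sum>j\<in>UNIV. M $ i $ j)"
  by (simp add: degvec_def matrix_vector_mult_def)

lemma transmat_mult_nth:
  "(transmat M *v x) $ i = (\<Sum>j\<in>UNIV. M $ i $ j * x $ j) / degvec M $ i"
  by (simp add: transmat_def matrix_vector_mult_def sum_divide_distrib)

lemma qnorm2_minus_qnorm2_transmat:
  fixes M :: "real^'n^'n"
  assumes sym: "transpose M = M" and deg: "\<And>i. degvec M $ i \<noteq> 0"
  shows "qnorm2 (degvec M) x - qnorm2 (degvec M) (transmat M *v x)
         = (\<Sum>i\<in>UNIV. \<Sum>j\<in>UNIV. M $ i $ j * (x $ j - (transmat M *v x) $ i)^2)"
proof -
  define y where "y = transmat M *v x"
  have row: "(\<Sum>j\<in>UNIV. M $ i $ j * (x $ j - y $ i)^2)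
             = (\<Sum>j\<in>UNIV. M $ i $ j * (x $ j)^2) - degvec M $ i * (y $ i)^2" for i
    unfolding degvec_nth
    by (rule sum_weighted_sq_deviation)
       (use deg in \<open>simp add: y_def transmat_mult_nth degvec_nth\<close>)
  have "(\<Sum>i\<in>UNIV. \<Sum>j\<in>UNIV. M $ i $ j * (x $ j)^2) = (\<Sum>j\<in>UNIV. degvec M $ j * (x $ j)^2)"
  proof -
    have "M $ i $ j = M $ j $ i" for i j
      using arg_cong[OF sym, of "\<lambda>A. A $ i $ j"] by (simp add: transpose_def)
    then show ?thesis
      by (subst sum.swap) (simp add: degvec_nth sum_distrib_right)
  qed
  then show ?thesis
    unfolding y_def[symmetric] row sum_subtractf qnorm2_def qinner_def
    by (simp add: power2_eq_square mult.assoc)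
qed

theorem lemma5:
  fixes M :: "real^'n^'n" and x :: "real^'n"
  assumes sym: "transpose M = M"
    and nonneg: "\<And>i j. M $ i $ j \<ge> 0"
    and ge1: "\<And>i j. M $ i $ j \<noteq> 0 \<Longrightarrow> M $ i $ j \<ge> 1"
    and diag: "\<And>i. M $ i $ i > 0"
  shows "qnorm2 (degvec M) (transmat M *v x)
         \<le> qnorm2 (degvec M) x
           - 1/2 * (\<Sum>i\<in>UNIV. Max {(x $ i - x $ j)^2 | j. M $ i $ j > 0})"
proof -
  define y where "y = transmat M *v x"
  have "degvec M $ i \<noteq> 0" for i
  proof -
    have "M $ i $ i \<le> degvec M $ i"
      unfolding degvec_nth by (rule member_le_sum) (auto intro: nonneg)
    with diag[of i] show ?thesis by linarith
  qed
  then have decrement: "qnorm2 (degvec M) x - qnorm2 (degvec M) y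
                        = (\<Sum>i\<in>UNIV. \<Sum>j\<in>UNIV. M $ i $ j * (x $ j - y $ i)^2)"
    using qnorm2_minus_qnorm2_transmat[OF sym] unfolding y_def by blast
  have "Max {(x $ i - x $ j)^2 | j. M $ i $ j > 0}
        \<le> 2 * (\<Sum>j\<in>UNIV. M $ i $ j * (x $ j - y $ i)^2)" for i
  proof (rule Max.boundedI)
    show "{(x $ i - x $ j)^2 | j. M $ i $ j > 0} \<noteq> {}"
      using diag[of i] by blast
  next
    fix a assume "a \<in> {(x $ i - x $ j)^2 | j. M $ i $ j > 0}"
    then obtain j where "a = (x $ i - x $ j)^2" "M $ i $ j > 0" by blast
    moreover have "1 \<le> M $ i $ i" "1 \<le> M $ i $ j"
      using ge1 diag[of i] \<open>M $ i $ j > 0\<close> by (metis less_irrefl)+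
    ultimately show "a \<le> 2 * (\<Sum>j\<in>UNIV. M $ i $ j * (x $ j - y $ i)^2)"
      by (simp add: sq_diff_le_two_weighted_sq_deviation nonneg)
  qed simp
  then have "(\<Sum>i\<in>UNIV. Max {(x $ i - x $ j)^2 | j. M $ i $ j > 0})
             \<le> 2 * (\<Sum>i\<in>UNIV. \<Sum>j\<in>UNIV. M $ i $ j * (x $ j - y $ i)^2)"
    by (simp add: sum_distrib_left sum_mono)
  with decrement show ?thesis
    unfolding y_def by linarith
qed

end
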